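(* Let $q_1,q_2,q_3,q_4$ satisfy $q_1q_2q_3q_4=1$, let $x$ be a variable, let $a\in\{1,2,3,4\}$, and let $\pi$ be a finite solid partition all of whose elements have $a$-th coordinate equal to $1$. Put $$\mathbf R=\sum_{(i_1,i_2,i_3,i_4)\in\pi}x\,q_1^{i_1-1}q_2^{i_2-1}q_3^{i_3-1}q_4^{i_4-1},$$ and define $$\mathcal Z^{\mathrm{D8}}_{\underline 4;4}[\pi,K]=\mathbb I\big[-(1-K^{-1})x^{-1}\mathbf R+\mathbf P_{123}^\vee\mathbf R^\vee\mathbf R\big],\qquad \widetilde{\mathcal Z}^{\mathrm{D6}}_{\bar a}[\pi]=\mathbb I\big[-\mathbf P_a^\vee x^{-1}\mathbf R+\mathbf P_{\bar a}^\vee\mathbf R^\vee\mathbf R\big].$$ Then, specializing $K=q_a$, $$(-1)^{\sigma_4(\pi)}\,\mathcal Z^{\mathrm{D8}}_{\underline 4;4}[\pi,q_a]=\widetilde{\mathcal Z}^{\mathrm{D6}}_{\bar a}[\pi],\qquad \sigma_4(\pi)=\#\{(i,i,i,j)\in\pi:i<j\}.$$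
   Context: A finite solid partition is a finite set $\pi\subset\mathbb Z_{\ge1}^4$ such that if $(i_1,\dots,i_4)\in\pi$ and $1\le i'_b\le i_b$ for all $b$ then $(i'_1,\dots,i'_4)\in\pi$. Characters are finite $\mathbb Z$-combinations of Laurent monomials; after substituting $q_4=(q_1q_2q_3)^{-1}$ the characters above are Laurent polynomials in $q_1,q_2,q_3$ and $K$ ($x$ cancels). $\mathbf X^\vee$ replaces each monomial $m$ by $m^{-1}$. $\mathbf P_a^\vee=1-q_a^{-1}$, and for $S\subseteq\{1,2,3,4\}$, $\mathbf P_S^\vee=\prod_{b\in S}(1-q_b^{-1})$; $\bar a=\{1,2,3,4\}\setminus\{a\}$. A character is movable if its constant-monomial coefficient is zero; for a movable character $\sum_m n_m m$ the index is $\mathbb I[\sum_m n_m m]=\prod_m(1-m^{-1})^{n_m}$. The characters inside both indices are movable, so both sides are well-defined. *)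

theory Defs
  imports Complex_Main "HOL-Library.Poly_Mapping" "HOL-Library.Product_Plus"
begin

text \<open>Laurent monomials in q1, q2, q3, x, K (after substituting q4 = (q1 q2 q3)^(-1)),
  represented by their exponent vectors; multiplication of monomials is addition.\<close>
type_synonym mon = "int \<times> int \<times> int \<times> int \<times> int"

text \<open>Characters: finite Z-combinations of Laurent monomials (convolution product).\<close>
type_synonym character = "mon \<Rightarrow>\<^sub>0 int"

fun mscale :: "int \<Rightarrow> mon \<Rightarrow> mon" where
  "mscale k (a, b, c, d, e) = (k * a, k * b, k * c, k * d, k * e)"

definition qv :: "nat \<Rightarrow> mon" where
  "qv b = (if b = 1 then (1, 0, 0, 0, 0) else if b = 2 then (0, 1, 0, 0, 0)
           else if b = 3 then (0, 0, 1, 0, 0) else (-1, -1, -1, 0, 0))"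

definition xv :: mon where "xv = (0, 0, 0, 1, 0)"
definition Kv :: mon where "Kv = (0, 0, 0, 0, 1)"

definition mono :: "mon \<Rightarrow> character" where
  "mono m = Poly_Mapping.single m 1"

definition dual :: "character \<Rightarrow> character" where
  "dual \<chi> = (\<Sum>m\<in>Poly_Mapping.keys \<chi>. Poly_Mapping.single (- m) (Poly_Mapping.lookup \<chi> m))"

definition Pv :: "nat set \<Rightarrow> character" where
  "Pv S = (\<Prod>b\<in>S. 1 - mono (- qv b))"

type_synonym point4 = "nat \<times> nat \<times> nat \<times> nat"

fun coord :: "nat \<Rightarrow> point4 \<Rightarrow> nat" where
  "coord b (i1, i2, i3, i4) = (if b = 1 then i1 else if b = 2 then i2 else if b = 3 then i3 else i4)"

definition solid_partition :: "point4 set \<Rightarrow> bool" where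
  "solid_partition \<pi> \<longleftrightarrow> finite \<pi> \<and> (\<forall>p\<in>\<pi>. \<forall>b\<in>{1..4}. 1 \<le> coord b p) \<and>
     (\<forall>p\<in>\<pi>. \<forall>p'. (\<forall>b\<in>{1..4}. 1 \<le> coord b p' \<and> coord b p' \<le> coord b p) \<longrightarrow> p' \<in> \<pi>)"

definition box_mon :: "point4 \<Rightarrow> mon" where
  "box_mon p = xv + (\<Sum>b\<in>{1..4}. mscale (int (coord b p) - 1) (qv b))"

definition Rchar :: "point4 set \<Rightarrow> character" where
  "Rchar \<pi> = (\<Sum>p\<in>\<pi>. mono (box_mon p))"

definition D8char :: "point4 set \<Rightarrow> character" where
  "D8char \<pi> = - ((1 - mono (- Kv)) * mono (- xv) * Rchar \<pi>)
               + Pv {1, 2, 3} * dual (Rchar \<pi>) * Rchar \<pi>"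

definition D6char :: "nat \<Rightarrow> point4 set \<Rightarrow> character" where
  "D6char a \<pi> = - (Pv {a} * mono (- xv) * Rchar \<pi>)
               + Pv ({1, 2, 3, 4} - {a}) * dual (Rchar \<pi>) * Rchar \<pi>"

fun evm :: "'f::field \<times> 'f \<times> 'f \<times> 'f \<times> 'f \<Rightarrow> mon \<Rightarrow> 'f" where
  "evm (q1, q2, q3, x, K) (e1, e2, e3, e4, e5) =
     q1 powi e1 * q2 powi e2 * q3 powi e3 * x powi e4 * K powi e5"

text \<open>Value of the index I[chi] = prod_m (1 - m^(-1))^(n_m) at a point.\<close>
definition index_at :: "'f::field \<times> 'f \<times> 'f \<times> 'f \<times> 'f \<Rightarrow> character \<Rightarrow> 'f" where
  "index_at v \<chi> = (\<Prod>m\<in>Poly_Mapping.keys \<chi>. (1 - inverse (evm v m)) powi (Poly_Mapping.lookup \<chi> m))"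

definition sigma4 :: "point4 set \<Rightarrow> nat" where
  "sigma4 \<pi> = card {p\<in>\<pi>. \<exists>i j. p = (i, i, i, j) \<and> i < j}"

end

theory Submission
  imports Defs
begin

(*
  Substituting K = q_a is the pushforward of characters along an additive map of exponent
  vectors, so the index at K = q_a equals the index of the pushed-forward character at K = 1.
  After the substitution the D8 character equals the D6 character plus dual(Y) - Y, where
  Y = dual(P_bc) q_a^-1 dual(R) R and {a, b, c} = {1, 2, 3}; for a = 4 the two characters agree.
  Pairing each monomial m with m^-1 and using (1 - m) / (1 - m^-1) = -m gives
  I[dual(Y) - Y] = (-1)^(Y_0) prod_m (-m)^(Y_m), and this product is 1 because Y is a sum of
  terms (1 - B)(1 - C) A. Finally, as all boxes have a-th coordinate 1, a box is determined by
  its monomial, so the constant term Y_0 is an inclusion-exclusion count over pairs of boxes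
  which leaves exactly the boxes (1, 1, 1, j) with j > 1, that is, sigma_4(pi) of them.
*)

section \<open>Pushforward of characters along maps of monomials\<close>

definition pushforward :: "('a \<Rightarrow> 'b) \<Rightarrow> ('a \<Rightarrow>\<^sub>0 int) \<Rightarrow> ('b \<Rightarrow>\<^sub>0 int)" where
  "pushforward f \<chi> = frag_extend (\<lambda>m. frag_of (f m)) \<chi>"

lemma mono_eq_frag_of: "mono m = frag_of m"
  by (simp add: mono_def)

lemma lookup_pushforward:
  "Poly_Mapping.lookup (pushforward f \<chi>) n =
     (\<Sum>m\<in>{m \<in> Poly_Mapping.keys \<chi>. f m = n}. Poly_Mapping.lookup \<chi> m)"
proof -
  have "Poly_Mapping.lookup (pushforward f \<chi>) n =
      (\<Sum>m\<in>Poly_Mapping.keys \<chi>. if f m = n then Poly_Mapping.lookup \<chi> m else 0)"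
    unfolding pushforward_def frag_extend_def by (auto simp: lookup_sum intro!: sum.cong)
  then show ?thesis by (simp add: sum.inter_filter)
qed

lemma keys_pushforward: "Poly_Mapping.keys (pushforward f \<chi>) \<subseteq> f ` Poly_Mapping.keys \<chi>"
  unfolding pushforward_def using keys_frag_extend by fastforce

lemma pushforward_diff: "pushforward f (\<chi> - \<psi>) = pushforward f \<chi> - pushforward f \<psi>"
  unfolding pushforward_def by (rule frag_extend_diff)

lemma pushforward_sum:
  "finite I \<Longrightarrow> pushforward f (\<Sum>i\<in>I. \<chi> i) = (\<Sum>i\<in>I. pushforward f (\<chi> i))"
  unfolding pushforward_def by (simp add: frag_extend_sum o_def)

lemma pushforward_frag_of [simp]: "pushforward f (frag_of m) = frag_of (f m)"
  unfolding pushforward_def by simp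

lemma pushforward_mono: "pushforward f (mono m) = mono (f m)"
  by (simp add: mono_eq_frag_of)

lemma pushforward_mult:
  fixes f :: "'a::monoid_add \<Rightarrow> 'b::monoid_add"
  assumes f_add: "\<And>m n. f (m + n) = f m + f n"
  shows "pushforward f (\<chi> * \<psi>) = pushforward f \<chi> * pushforward f \<psi>"
  using subset_UNIV[of "Poly_Mapping.keys \<chi>"]
proof (induction \<chi> rule: frag_induction)
  case (one m)
  show ?case
    using subset_UNIV[of "Poly_Mapping.keys \<psi>"]
  proof (induction \<psi> rule: frag_induction)
    case (one n)
    then show ?case by (simp add: mult_single f_add)
  next
    case (diff \<psi>1 \<psi>2)
    then show ?case by (simp add: right_diff_distrib pushforward_diff)
  qed (simp add: pushforward_def)
next
  case (diff \<chi>1 \<chi>2)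
  then show ?case by (simp add: left_diff_distrib pushforward_diff)
qed (simp add: pushforward_def)

lemma pushforward_one:
  fixes f :: "'a::monoid_add \<Rightarrow> 'b::monoid_add"
  shows "f 0 = 0 \<Longrightarrow> pushforward f 1 = 1"
  using pushforward_frag_of[of f 0] by (simp add: one_poly_mapping_def)

lemma pushforward_prod:
  fixes f :: "'a::comm_monoid_add \<Rightarrow> 'b::comm_monoid_add"
  assumes "\<And>m n. f (m + n) = f m + f n" "f 0 = 0"
  shows "finite I \<Longrightarrow> pushforward f (\<Prod>i\<in>I. \<chi> i) = (\<Prod>i\<in>I. pushforward f (\<chi> i))"
  by (induction I rule: finite_induct) (simp_all add: pushforward_one pushforward_mult assms)

lemma dual_eq_pushforward: "dual \<chi> = pushforward uminus \<chi>"
proof -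
  have "frag_cmul c (frag_of m) = Poly_Mapping.single m c" for c and m :: mon
    by (rule poly_mapping_eqI) (simp add: lookup_single when_def)
  then show ?thesis
    unfolding dual_def pushforward_def frag_extend_def by simp
qed

lemma lookup_dual: "Poly_Mapping.lookup (dual \<chi>) m = Poly_Mapping.lookup \<chi> (- m)"
proof -
  have "{k \<in> Poly_Mapping.keys \<chi>. - k = m} = (if - m \<in> Poly_Mapping.keys \<chi> then {- m} else {})"
    by auto
  then show ?thesis
    by (simp add: dual_eq_pushforward lookup_pushforward in_keys_iff)
qed

lemma dual_dual [simp]: "dual (dual \<chi>) = \<chi>"
  by (rule poly_mapping_eqI) (simp add: lookup_dual)

lemma dual_mono [simp]: "dual (mono m) = mono (- m)"
  by (simp add: dual_eq_pushforward pushforward_mono)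

lemma dual_one [simp]: "dual 1 = 1"
  by (simp add: dual_eq_pushforward pushforward_one)

lemma dual_diff [simp]: "dual (\<chi> - \<psi>) = dual \<chi> - dual \<psi>"
  by (simp add: dual_eq_pushforward pushforward_diff)

lemma dual_mult [simp]: "dual (\<chi> * \<psi>) = dual \<chi> * dual \<psi>"
  by (simp add: dual_eq_pushforward pushforward_mult)

lemma mono_mult: "mono m * mono n = mono (m + n)"
  by (simp add: mono_def mult_single)

lemma mono_zero: "mono 0 = 1"
  by (simp add: mono_def one_poly_mapping_def)

lemma lookup_mono: "Poly_Mapping.lookup (mono m) n = (if m = n then 1 else 0)"
  by (simp add: mono_def lookup_single when_def)


section \<open>Multiplicative evaluation of characters\<close>

definition char_prod :: "('a \<Rightarrow> 'f::field) \<Rightarrow> ('a \<Rightarrow>\<^sub>0 int) \<Rightarrow> 'f" where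
  "char_prod \<phi> \<chi> = (\<Prod>m\<in>Poly_Mapping.keys \<chi>. \<phi> m powi Poly_Mapping.lookup \<chi> m)"

lemma index_at_eq_char_prod: "index_at w \<chi> = char_prod (\<lambda>m. 1 - inverse (evm w m)) \<chi>"
  unfolding index_at_def char_prod_def ..

lemma char_prod_superset:
  assumes "finite S" "Poly_Mapping.keys \<chi> \<subseteq> S"
  shows "char_prod \<phi> \<chi> = (\<Prod>m\<in>S. \<phi> m powi Poly_Mapping.lookup \<chi> m)"
  unfolding char_prod_def
  by (rule prod.mono_neutral_left) (use assms in \<open>auto simp: in_keys_iff\<close>)

lemma char_prod_add:
  assumes "\<forall>m \<in> Poly_Mapping.keys \<chi> \<union> Poly_Mapping.keys \<psi>. \<phi> m \<noteq> 0"
  shows "char_prod \<phi> (\<chi> + \<psi>) = char_prod \<phi> \<chi> * char_prod \<phi> \<psi>"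
proof -
  let ?S = "Poly_Mapping.keys \<chi> \<union> Poly_Mapping.keys \<psi>"
  have "char_prod \<phi> (\<chi> + \<psi>) = (\<Prod>m\<in>?S. \<phi> m powi Poly_Mapping.lookup (\<chi> + \<psi>) m)"
    by (rule char_prod_superset) (auto simp: keys_add)
  also have "\<dots> = (\<Prod>m\<in>?S. \<phi> m powi Poly_Mapping.lookup \<chi> m * \<phi> m powi Poly_Mapping.lookup \<psi> m)"
    by (rule prod.cong) (use assms in \<open>auto simp: lookup_add power_int_add\<close>)
  also have "\<dots> = char_prod \<phi> \<chi> * char_prod \<phi> \<psi>"
    by (simp add: prod.distrib char_prod_superset[of ?S])
  finally show ?thesis .
qed

lemma char_prod_uminus: "char_prod \<phi> (- \<chi>) = inverse (char_prod \<phi> \<chi>)"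
  unfolding char_prod_def by (simp add: power_int_minus prod_inversef[symmetric] o_def)

lemma char_prod_diff:
  assumes "\<forall>m \<in> Poly_Mapping.keys \<chi> \<union> Poly_Mapping.keys \<psi>. \<phi> m \<noteq> 0"
  shows "char_prod \<phi> (\<chi> - \<psi>) = char_prod \<phi> \<chi> / char_prod \<phi> \<psi>"
  using char_prod_add[of "\<chi>" "- \<psi>" \<phi>] assms by (simp add: char_prod_uminus divide_inverse)

lemma char_prod_zero [simp]: "char_prod \<phi> 0 = 1"
  by (simp add: char_prod_def)

lemma char_prod_mono [simp]: "char_prod \<phi> (mono m) = \<phi> m"
  unfolding char_prod_def mono_def by simp

lemma char_prod_sum:
  assumes "\<And>m. \<phi> m \<noteq> 0"
  shows "finite I \<Longrightarrow> char_prod \<phi> (\<Sum>i\<in>I. \<chi> i) = (\<Prod>i\<in>I. char_prod \<phi> (\<chi> i))"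
  by (induction I rule: finite_induct) (simp_all add: char_prod_add assms)

lemma power_int_sum:
  fixes z :: "'f::field"
  assumes "z \<noteq> 0"
  shows "finite I \<Longrightarrow> z powi (\<Sum>i\<in>I. e i) = (\<Prod>i\<in>I. z powi e i)"
  by (induction I rule: finite_induct) (simp_all add: power_int_add assms)

lemma char_prod_pushforward:
  assumes "\<forall>m \<in> Poly_Mapping.keys \<chi>. \<psi> (f m) = \<phi> m \<and> \<phi> m \<noteq> 0"
  shows "char_prod \<psi> (pushforward f \<chi>) = char_prod \<phi> \<chi>"
proof -
  let ?fibre = "\<lambda>n. {m \<in> Poly_Mapping.keys \<chi>. f m = n}"
  have "char_prod \<psi> (pushforward f \<chi>) =
      (\<Prod>n \<in> f ` Poly_Mapping.keys \<chi>. \<psi> n powi Poly_Mapping.lookup (pushforward f \<chi>) n)"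
    by (rule char_prod_superset[OF _ keys_pushforward]) simp
  also have "\<dots> = (\<Prod>n \<in> f ` Poly_Mapping.keys \<chi>. \<Prod>m \<in> ?fibre n. \<phi> m powi Poly_Mapping.lookup \<chi> m)"
  proof (rule prod.cong[OF refl])
    fix n assume "n \<in> f ` Poly_Mapping.keys \<chi>"
    then have "\<psi> n \<noteq> 0" using assms by auto
    then have "\<psi> n powi Poly_Mapping.lookup (pushforward f \<chi>) n =
        (\<Prod>m \<in> ?fibre n. \<psi> n powi Poly_Mapping.lookup \<chi> m)"
      by (simp add: lookup_pushforward power_int_sum)
    also have "\<dots> = (\<Prod>m \<in> ?fibre n. \<phi> m powi Poly_Mapping.lookup \<chi> m)"
      by (rule prod.cong) (use assms in auto)
    finally show "\<psi> n powi Poly_Mapping.lookup (pushforward f \<chi>) n = \<dots>" .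
  qed
  also have "\<dots> = char_prod \<phi> \<chi>"
    unfolding char_prod_def by (rule prod.group) auto
  finally show ?thesis .
qed


section \<open>The specialisation \<open>K = q\<^sub>a\<close>\<close>

lemma evm_add:
  fixes q1 q2 q3 x K :: "'f::field"
  assumes "q1 \<noteq> 0" "q2 \<noteq> 0" "q3 \<noteq> 0" "x \<noteq> 0" "K \<noteq> 0"
  shows "evm (q1, q2, q3, x, K) (m + n) = evm (q1, q2, q3, x, K) m * evm (q1, q2, q3, x, K) n"
  using assms by (cases m; cases n) (simp add: power_int_add mult_ac)

lemma evm_nonzero:
  fixes q1 q2 q3 x K :: "'f::field"
  assumes "q1 \<noteq> 0" "q2 \<noteq> 0" "q3 \<noteq> 0" "x \<noteq> 0" "K \<noteq> 0"
  shows "evm (q1, q2, q3, x, K) m \<noteq> 0"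
  using assms by (cases m) simp

lemma evm_mscale: "evm (q1, q2, q3, x, K) (mscale k m) = evm (q1, q2, q3, x, K) m powi k"
  by (cases m) (simp add: power_int_mult mult.commute[of k] power_int_mult_distrib)

definition specialize_K :: "nat \<Rightarrow> mon \<Rightarrow> mon" where
  "specialize_K a m = (case m of (e1, e2, e3, e4, e5) \<Rightarrow> (e1, e2, e3, e4, 0) + mscale e5 (qv a))"

lemma mscale_add: "mscale (k + l) m = mscale k m + mscale l m"
  by (cases m) (simp add: algebra_simps)

lemma mscale_zero [simp]: "mscale 0 m = 0"
  by (cases m) (simp add: zero_prod_def)

lemma specialize_K_add: "specialize_K a (m + n) = specialize_K a m + specialize_K a n"
  by (cases m; cases n) (simp add: specialize_K_def mscale_add algebra_simps)

lemma specialize_K_zero: "specialize_K a 0 = 0"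
  by (simp add: specialize_K_def zero_prod_def)

lemma specialize_K_K_free [simp]: "specialize_K a (e1, e2, e3, e4, 0) = (e1, e2, e3, e4, 0)"
  by (simp add: specialize_K_def zero_prod_def)

lemma specialize_K_qv: "specialize_K a (- qv b) = - qv b"
  by (simp add: specialize_K_def qv_def)

lemma specialize_K_Kv: "specialize_K a (- Kv) = - qv a"
  by (simp add: specialize_K_def Kv_def qv_def)

lemma evm_specialize_K:
  fixes q1 q2 q3 x :: "'f::field"
  assumes "q1 \<noteq> 0" "q2 \<noteq> 0" "q3 \<noteq> 0" "x \<noteq> 0"
  shows "evm (q1, q2, q3, x, evm (q1, q2, q3, x, 1) (qv a)) m = evm (q1, q2, q3, x, 1) (specialize_K a m)"
  using assms by (cases m) (simp add: specialize_K_def evm_add evm_mscale)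

lemma index_at_specialize_K:
  fixes q1 q2 q3 x :: "'f::field"
  assumes "q1 \<noteq> 0" "q2 \<noteq> 0" "q3 \<noteq> 0" "x \<noteq> 0"
    and "\<forall>m\<in>Poly_Mapping.keys \<chi>. evm (q1, q2, q3, x, evm (q1, q2, q3, x, 1) (qv a)) m \<noteq> 1"
  shows "index_at (q1, q2, q3, x, evm (q1, q2, q3, x, 1) (qv a)) \<chi> =
    index_at (q1, q2, q3, x, 1) (pushforward (specialize_K a) \<chi>)"
  unfolding index_at_eq_char_prod
  by (rule char_prod_pushforward[symmetric])
    (use assms in \<open>simp add: evm_specialize_K\<close>)


lemma atLeastAtMost_1_4: "{1..4::nat} = {1, 2, 3, 4}"
  by auto

lemma box_mon_eq:
  "box_mon (i1, i2, i3, i4) = (int i1 - int i4, int i2 - int i4, int i3 - int i4, 1, 0)"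
  unfolding box_mon_def atLeastAtMost_1_4 by (simp add: qv_def xv_def algebra_simps)

lemma specialize_K_box_mon: "specialize_K a (box_mon p) = box_mon p"
  by (cases p) (simp add: box_mon_eq)

lemma specialize_K_uminus_box_mon: "specialize_K a (- box_mon p) = - box_mon p"
  by (cases p) (simp add: box_mon_eq)

lemma dual_Rchar: "finite \<pi> \<Longrightarrow> dual (Rchar \<pi>) = (\<Sum>p\<in>\<pi>. mono (- box_mon p))"
  unfolding Rchar_def dual_eq_pushforward by (simp add: pushforward_sum pushforward_mono)

lemma pushforward_specialize_K_Rchar:
  "finite \<pi> \<Longrightarrow> pushforward (specialize_K a) (Rchar \<pi>) = Rchar \<pi>"
  unfolding Rchar_def
  by (simp add: pushforward_sum pushforward_mono specialize_K_box_mon)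

lemma pushforward_specialize_K_dual_Rchar:
  "finite \<pi> \<Longrightarrow> pushforward (specialize_K a) (dual (Rchar \<pi>)) = dual (Rchar \<pi>)"
  by (simp add: dual_Rchar pushforward_sum pushforward_mono specialize_K_uminus_box_mon)

lemma pushforward_specialize_K_Pv:
  "finite S \<Longrightarrow> pushforward (specialize_K a) (Pv S) = Pv S"
  unfolding Pv_def
  by (simp add: pushforward_prod specialize_K_add specialize_K_zero pushforward_diff
      pushforward_one pushforward_mono specialize_K_qv)

lemma pushforward_specialize_K_D8char:
  assumes "finite \<pi>"
  shows "pushforward (specialize_K a) (D8char \<pi>) =
    - (Pv {a} * mono (- xv) * Rchar \<pi>) + Pv {1, 2, 3} * dual (Rchar \<pi>) * Rchar \<pi>"
proof -
  have "Pv {a} = 1 - mono (- qv a)"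
    unfolding Pv_def by simp
  then show ?thesis
    unfolding D8char_def
    by (simp add: pushforward_mult specialize_K_add
        pushforward_diff pushforward_one specialize_K_zero pushforward_mono specialize_K_Kv
        xv_def pushforward_specialize_K_Rchar pushforward_specialize_K_dual_Rchar
        pushforward_specialize_K_Pv assms)
qed


section \<open>Comparing the two characters\<close>

definition Ychar :: "nat \<Rightarrow> point4 set \<Rightarrow> character" where
  "Ychar a \<pi> = Pv ({1, 2, 3} - {a}) * mono (- qv a) * dual (Rchar \<pi>) * Rchar \<pi>"

lemma other_two_coords:
  assumes "a \<in> {1, 2, 3::nat}"
  obtains b c where "{1, 2, 3} = {a, b, c}" "distinct [a, b, c, 4]" "qv a + qv b + qv c = - qv 4"
proof -
  from assms consider "a = 1" | "a = 2" | "a = 3" by auto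
  then show ?thesis
  proof cases
    case 1 then show ?thesis by (intro that[of 2 3]) (auto simp: qv_def)
  next
    case 2 then show ?thesis by (intro that[of 1 3]) (auto simp: qv_def)
  next
    case 3 then show ?thesis by (intro that[of 1 2]) (auto simp: qv_def)
  qed
qed

(* With X = Y^-1 and q_4^-1 = q_a q_b q_c this says
   dual(P_abc) - dual(P_bc4) = dual(Q) - Q  for  Q = dual(P_bc) q_a^-1. *)
lemma duality_antisymmetric_identity:
  fixes Xa Xb Xc Ya Yb Yc :: "'r::comm_ring_1"
  assumes "Xa * Ya = 1" "Xb * Yb = 1" "Xc * Yc = 1"
  shows "(1 - Ya) * (1 - Yb) * (1 - Yc) - (1 - Yb) * (1 - Yc) * (1 - Xa * Xb * Xc)
       = (1 - Xb) * (1 - Xc) * Xa - (1 - Yb) * (1 - Yc) * Ya"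
proof -
  have b: "1 - Xb = - (Xb * (1 - Yb))" and c: "1 - Xc = - (Xc * (1 - Yc))"
    using assms(2,3) by (simp_all add: algebra_simps)
  have "(1 - Xb) * (1 - Xc) * Xa = (1 - Yb) * (1 - Yc) * (Xa * Xb * Xc)"
    unfolding b c by (simp add: algebra_simps)
  then show ?thesis by (simp add: algebra_simps)
qed

lemma pushforward_specialize_K_D8char_eq_D6char:
  assumes "a \<in> {1, 2, 3}" "finite \<pi>"
  shows "pushforward (specialize_K a) (D8char \<pi>) = D6char a \<pi> + (dual (Ychar a \<pi>) - Ychar a \<pi>)"
proof -
  obtain b c where abc: "{1, 2, 3} = {a, b, c}" "distinct [a, b, c, 4]"
    and qv_sum: "qv a + qv b + qv c = - qv 4"
    using other_two_coords[OF assms(1)] .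
  have other: "{1, 2, 3} - {a} = {b, c}" and all_but_a: "{1, 2, 3, 4} - {a} = {b, c, 4}"
    using abc by auto
  define R where "R = Rchar \<pi>"
  define X where "X t = mono (qv t)" for t
  define Y where "Y t = mono (- qv t)" for t
  have inv: "X t * Y t = 1" for t
    by (simp add: X_def Y_def mono_mult mono_zero)
  have P123: "Pv {1, 2, 3} = (1 - Y a) * (1 - Y b) * (1 - Y c)"
    unfolding abc Pv_def Y_def using abc(2) by (simp add: mult_ac)
  have Pa: "Pv ({1, 2, 3, 4} - {a}) = (1 - Y b) * (1 - Y c) * (1 - X a * X b * X c)"
  proof -
    have "Y 4 = X a * X b * X c"
      unfolding X_def Y_def mono_mult qv_sum[symmetric] by simp
    then show ?thesis
      unfolding all_but_a Pv_def using abc(2) by (simp add: Y_def mult_ac)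
  qed
  have Ychar_eq: "Ychar a \<pi> = (1 - Y b) * (1 - Y c) * Y a * dual R * R"
    unfolding Ychar_def other Pv_def R_def Y_def using abc(2) by simp
  have "dual (Ychar a \<pi>) = (1 - X b) * (1 - X c) * X a * dual R * R"
    unfolding Ychar_eq by (simp add: X_def Y_def mult_ac)
  then have "dual (Ychar a \<pi>) - Ychar a \<pi> =
      ((1 - X b) * (1 - X c) * X a - (1 - Y b) * (1 - Y c) * Y a) * dual R * R"
    unfolding Ychar_eq by (simp add: algebra_simps)
  also have "\<dots> = (Pv {1, 2, 3} - Pv ({1, 2, 3, 4} - {a})) * dual R * R"
    unfolding P123 Pa duality_antisymmetric_identity[OF inv inv inv] ..
  finally show ?thesis
    unfolding pushforward_specialize_K_D8char[OF assms(2)] D6char_def R_def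
    by (simp add: algebra_simps)
qed

lemma pushforward_specialize_K_D8char_4:
  "finite \<pi> \<Longrightarrow> pushforward (specialize_K 4) (D8char \<pi>) = D6char 4 \<pi>"
  by (simp add: pushforward_specialize_K_D8char D6char_def insert_Diff_if)


section \<open>The index of an antisymmetric character\<close>

lemma prod_involution_eq_1:
  fixes f :: "'a \<Rightarrow> 'b::comm_monoid_mult"
  assumes "finite X"
    and "\<And>x. x \<in> X \<Longrightarrow> h x \<in> X" "\<And>x. x \<in> X \<Longrightarrow> h (h x) = x" "\<And>x. x \<in> X \<Longrightarrow> h x \<noteq> x"
    and "\<And>x. x \<in> X \<Longrightarrow> f (h x) * f x = 1"
  shows "(\<Prod>x\<in>X. f x) = 1"
  using assms
proof (induction X rule: finite_psubset_induct)
  case (psubset X)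
  show ?case
  proof (cases "X = {}")
    case False
    then obtain x where x: "x \<in> X" by blast
    let ?X' = "X - {x, h x}"
    have hx: "h x \<in> X - {x}"
      using psubset.prems(1,3) x by auto
    have "(\<Prod>y\<in>X. f y) = f x * (\<Prod>y\<in>X - {x}. f y)"
      by (rule prod.remove[OF psubset.hyps(1) x])
    also have "(\<Prod>y\<in>X - {x}. f y) = f (h x) * (\<Prod>y\<in>X - {x} - {h x}. f y)"
      by (rule prod.remove[OF _ hx]) (use psubset.hyps(1) in simp)
    also have "X - {x} - {h x} = ?X'"
      by auto
    finally have "(\<Prod>y\<in>X. f y) = f (h x) * f x * (\<Prod>y\<in>?X'. f y)"
      by (simp add: mult_ac)
    also have "(\<Prod>y\<in>?X'. f y) = 1"
    proof (rule psubset.IH)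
      show "?X' \<subset> X" using x by auto
      show "h y \<in> ?X'" if y: "y \<in> ?X'" for y
      proof -
        have hhy: "h (h y) = y" and hhx: "h (h x) = x"
          using y x psubset.prems(2) by auto
        have "h y \<noteq> x" "h y \<noteq> h x"
          using y arg_cong[of "h y" x h] arg_cong[of "h y" "h x" h] unfolding hhy hhx by auto
        then show ?thesis using y psubset.prems(1)[of y] by blast
      qed
      show "h (h y) = y" "h y \<noteq> y" "f (h y) * f y = 1" if "y \<in> ?X'" for y
        using that psubset.prems(2-4) by blast+
    qed
    finally show ?thesis using psubset.prems(4) x by simp
  qed simp
qed

lemma mult_hom_zero:
  fixes E :: "'a::monoid_add \<Rightarrow> 'f::field"
  assumes "\<And>m n. E (m + n) = E m * E n" "\<And>m. E m \<noteq> 0"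
  shows "E 0 = 1"
  using assms(1)[of 0 0] assms(2)[of 0] by simp

lemma mult_hom_uminus:
  fixes E :: "'a::group_add \<Rightarrow> 'f::field"
  assumes "\<And>m n. E (m + n) = E m * E n" "\<And>m. E m \<noteq> 0"
  shows "E (- m) = inverse (E m)"
  using assms(1)[of m "- m"] mult_hom_zero[OF assms] assms(2)[of m] by (simp add: field_simps)

lemma lookup_dual_diff:
  "Poly_Mapping.lookup (dual \<chi> - \<chi>) m = Poly_Mapping.lookup \<chi> (- m) - Poly_Mapping.lookup \<chi> m"
  by (simp add: lookup_minus lookup_dual)

lemma char_prod_dual_diff:
  fixes E :: "mon \<Rightarrow> 'f::field" and Y :: character
  assumes E_uminus: "\<And>m. E (- m) = inverse (E m)" and E_nonzero: "\<And>m. E m \<noteq> 0"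
    and avoid: "\<forall>m \<in> Poly_Mapping.keys (dual Y - Y). E m \<noteq> 1"
  shows "char_prod (\<lambda>m. 1 - inverse (E m)) (dual Y - Y) =
    (\<Prod>m \<in> Poly_Mapping.keys (dual Y - Y). (- E m) powi Poly_Mapping.lookup Y m)"
proof -
  define G where "G m = 1 - inverse (E m)" for m
  define S where "S = Poly_Mapping.keys (dual Y - Y)"
  have S_neg: "- m \<in> S" if "m \<in> S" for m
    using that by (simp add: S_def in_keys_iff lookup_dual_diff)
  have S_uminus: "uminus ` S = S"
  proof
    show "uminus ` S \<subseteq> S" using S_neg by auto
    show "S \<subseteq> uminus ` S"
    proof
      fix m assume "m \<in> S"
      then show "m \<in> uminus ` S" using S_neg[of m] by (intro image_eqI[of m uminus "- m"]) simp_all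
    qed
  qed
  have G_nonzero: "G m \<noteq> 0" if "m \<in> S" for m
    using avoid that by (simp add: G_def S_def)
  have G_ratio: "G (- m) / G m = - E m" if "m \<in> S" for m
    using avoid that E_nonzero[of m] by (auto simp: G_def S_def E_uminus field_simps)
  have "char_prod G (dual Y - Y) =
      (\<Prod>m\<in>S. G m powi Poly_Mapping.lookup Y (- m) / G m powi Poly_Mapping.lookup Y m)"
    unfolding char_prod_def S_def[symmetric] lookup_dual_diff
    by (rule prod.cong) (simp_all add: G_nonzero power_int_diff)
  also have "\<dots> = (\<Prod>m\<in>uminus ` S. G m powi Poly_Mapping.lookup Y (- m)) /
      (\<Prod>m\<in>S. G m powi Poly_Mapping.lookup Y m)"
    by (simp add: S_uminus prod_dividef)
  also have "\<dots> = (\<Prod>m\<in>S. (G (- m) / G m) powi Poly_Mapping.lookup Y m)"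
    by (simp add: prod.reindex prod_dividef power_int_divide_distrib)
  also have "\<dots> = (\<Prod>m\<in>S. (- E m) powi Poly_Mapping.lookup Y m)"
    by (simp add: G_ratio)
  finally show ?thesis unfolding G_def S_def .
qed

lemma prod_symmetric_part:
  fixes E :: "mon \<Rightarrow> 'f::field" and Y :: character
  assumes E_mult: "\<And>m n. E (m + n) = E m * E n" and E_nonzero: "\<And>m. E m \<noteq> 0"
  shows "(\<Prod>m \<in> {m \<in> Poly_Mapping.keys Y. Poly_Mapping.lookup Y (- m) = Poly_Mapping.lookup Y m}.
      (- E m) powi Poly_Mapping.lookup Y m) = (-1) powi Poly_Mapping.lookup Y 0"
proof -
  define V where "V = {m \<in> Poly_Mapping.keys Y. Poly_Mapping.lookup Y (- m) = Poly_Mapping.lookup Y m}"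
  define H where "H m = (- E m) powi Poly_Mapping.lookup Y m" for m
  have H_zero: "H 0 = (-1) powi Poly_Mapping.lookup Y 0"
    by (simp add: H_def mult_hom_zero[OF E_mult E_nonzero])
  have "(\<Prod>m \<in> V - {0}. H m) = 1"
  proof (rule prod_involution_eq_1[where h = uminus])
    show "H (- m) * H m = 1" if "m \<in> V - {0}" for m
      using that E_nonzero[of m]
      by (simp add: V_def H_def mult_hom_uminus[OF E_mult E_nonzero] flip: power_int_mult_distrib)
    show "- m \<noteq> m" if "m \<in> V - {0}" for m
      using that by (cases m) (auto simp: zero_prod_def)
  qed (auto simp: V_def in_keys_iff)
  moreover have "(\<Prod>m \<in> V. H m) = H 0 * (\<Prod>m \<in> V - {0}. H m)"
  proof (cases "0 \<in> V")
    case True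
    then show ?thesis by (simp add: V_def prod.remove)
  next
    case False
    then have "Poly_Mapping.lookup Y 0 = 0" by (simp add: V_def in_keys_iff)
    then show ?thesis using False by (simp add: H_def)
  qed
  ultimately show ?thesis
    unfolding V_def[symmetric] H_def[symmetric] H_zero by simp
qed

lemma char_prod_antisymmetric:
  fixes E :: "mon \<Rightarrow> 'f::field" and Y :: character
  assumes E_mult: "\<And>m n. E (m + n) = E m * E n" and E_nonzero: "\<And>m. E m \<noteq> 0"
    and avoid: "\<forall>m \<in> Poly_Mapping.keys (dual Y - Y). E m \<noteq> 1"
    and det: "char_prod (\<lambda>m. - E m) Y = 1"
  shows "char_prod (\<lambda>m. 1 - inverse (E m)) (dual Y - Y) = (-1) powi Poly_Mapping.lookup Y 0"
proof -
  define H where "H m = (- E m) powi Poly_Mapping.lookup Y m" for m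
  define S where "S = Poly_Mapping.keys (dual Y - Y)"
  define V where "V = {m \<in> Poly_Mapping.keys Y. Poly_Mapping.lookup Y (- m) = Poly_Mapping.lookup Y m}"
  have "(\<Prod>m\<in>S. H m) = (\<Prod>m \<in> Poly_Mapping.keys Y - V. H m)"
    by (rule prod.mono_neutral_cong) (auto simp: S_def V_def H_def in_keys_iff lookup_dual_diff)
  moreover have "(\<Prod>m \<in> Poly_Mapping.keys Y. H m) = 1"
    using det by (simp add: char_prod_def H_def)
  moreover have "V \<subseteq> Poly_Mapping.keys Y"
    by (simp add: V_def)
  ultimately have "1 = (\<Prod>m\<in>V. H m) * (\<Prod>m\<in>S. H m)"
    using prod.subset_diff[of V "Poly_Mapping.keys Y" H] by (simp add: mult.commute)
  also have "(\<Prod>m\<in>V. H m) = (-1) powi Poly_Mapping.lookup Y 0"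
    unfolding V_def H_def by (rule prod_symmetric_part[OF E_mult E_nonzero])
  finally have "(\<Prod>m\<in>S. H m) = (-1) powi Poly_Mapping.lookup Y 0"
    by (metis power_int_minus_one_mult_self' mult_1_right)
  then show ?thesis
    unfolding H_def S_def
    by (simp add: char_prod_dual_diff mult_hom_uminus[OF E_mult E_nonzero] E_nonzero avoid)
qed

lemma Ychar_eq_sum:
  assumes "finite \<pi>" "{1, 2, 3} - {a} = {b, c}" "b \<noteq> c"
  shows "Ychar a \<pi> = (\<Sum>p\<in>\<pi>. \<Sum>p'\<in>\<pi>.
    (1 - mono (- qv b)) * (1 - mono (- qv c)) * mono (box_mon p' - box_mon p - qv a))"
proof -
  have "Ychar a \<pi> = (1 - mono (- qv b)) * (1 - mono (- qv c)) * (\<Sum>p\<in>\<pi>. \<Sum>p'\<in>\<pi>.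
      mono (- qv a) * mono (- box_mon p) * mono (box_mon p'))"
    unfolding Ychar_def assms(2) dual_Rchar[OF assms(1)] unfolding Rchar_def Pv_def
    using assms(3) by (simp add: sum_product sum_distrib_left mult_ac)
  also have "(\<Sum>p\<in>\<pi>. \<Sum>p'\<in>\<pi>. mono (- qv a) * mono (- box_mon p) * mono (box_mon p')) =
      (\<Sum>p\<in>\<pi>. \<Sum>p'\<in>\<pi>. mono (box_mon p' - box_mon p - qv a))"
    by (intro sum.cong refl) (simp add: mono_mult algebra_simps)
  finally show ?thesis
    by (simp add: sum_distrib_left)
qed

lemma char_prod_double_difference:
  fixes E :: "mon \<Rightarrow> 'f::field"
  assumes E_mult: "\<And>m n. E (m + n) = E m * E n" and E_nonzero: "\<And>m. E m \<noteq> 0"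
  shows "char_prod (\<lambda>m. - E m) ((1 - mono B) * (1 - mono C) * mono A) = 1"
proof -
  have "(1 - mono B) * (1 - mono C) * mono A = (mono A + mono (B + C + A)) - (mono (B + A) + mono (C + A))"
    by (simp add: algebra_simps mono_mult)
  then show ?thesis
    using E_nonzero by (simp add: char_prod_diff char_prod_add E_mult)
qed

lemma char_prod_Ychar:
  fixes E :: "mon \<Rightarrow> 'f::field"
  assumes E_mult: "\<And>m n. E (m + n) = E m * E n" and E_nonzero: "\<And>m. E m \<noteq> 0"
    and "finite \<pi>" "a \<in> {1, 2, 3}"
  shows "char_prod (\<lambda>m. - E m) (Ychar a \<pi>) = 1"
proof -
  obtain b c where "{1, 2, 3} = {a, b, c}" "distinct [a, b, c, 4]"
    using other_two_coords[OF assms(4)] .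
  then have "{1, 2, 3} - {a} = {b, c}" "b \<noteq> c"
    by auto
  then show ?thesis
    using E_nonzero assms(3)
    by (simp add: Ychar_eq_sum char_prod_sum char_prod_double_difference[OF E_mult E_nonzero])
qed


section \<open>The constant term of \<open>Ychar\<close>\<close>

definition lower :: "nat set \<Rightarrow> point4 \<Rightarrow> point4" where
  "lower T p = (case p of (i1, i2, i3, i4) \<Rightarrow>
     (i1 - of_bool (1 \<in> T), i2 - of_bool (2 \<in> T), i3 - of_bool (3 \<in> T), i4 - of_bool (4 \<in> T)))"

lemma coord_lower: "b \<in> {1..4} \<Longrightarrow> coord b (lower T p) = coord b p - of_bool (b \<in> T)"
  unfolding atLeastAtMost_1_4 by (cases p) (auto simp: lower_def)

lemma mscale_diff: "mscale (k - l) m = mscale k m - mscale l m"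
  by (cases m) (simp add: algebra_simps)

lemma box_mon_lower:
  assumes "T \<subseteq> {1..4}" "\<forall>t\<in>T. 1 \<le> coord t p"
  shows "box_mon (lower T p) + (\<Sum>t\<in>T. qv t) = box_mon p"
proof -
  have "int (coord b (lower T p)) - 1 = (int (coord b p) - 1) - of_bool (b \<in> T)" if "b \<in> {1..4}" for b
    using assms that by (auto simp: coord_lower of_nat_diff)
  then have "box_mon (lower T p) = box_mon p -
      (\<Sum>b\<in>{1..4}. mscale (of_bool (b \<in> T)) (qv b))"
    unfolding box_mon_def by (simp add: mscale_diff sum_subtractf)
  also have "(\<Sum>b\<in>{1..4}. mscale (of_bool (b \<in> T)) (qv b)) = (\<Sum>t\<in>T. qv t)"
  proof -
    have "mscale (of_bool P) m = (if P then m else 0)" for P m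
      by (cases m) (simp add: zero_prod_def)
    then show ?thesis
      using assms(1) by (simp add: sum.inter_restrict[symmetric] Int_absorb1)
  qed
  finally show ?thesis by simp
qed

lemma box_mon_inj:
  assumes "coord a p = coord a p'" "box_mon p = box_mon p'"
  shows "p = p'"
proof -
  obtain i1 i2 i3 i4 j1 j2 j3 j4 where p: "p = (i1, i2, i3, i4)" and p': "p' = (j1, j2, j3, j4)"
    by (cases p, cases p')
  have diffs: "int i1 - int j1 = int i4 - int j4" "int i2 - int j2 = int i4 - int j4"
    "int i3 - int j3 = int i4 - int j4"
    using assms(2) by (simp_all add: p p' box_mon_eq)
  moreover have "i4 = j4"
    using assms(1) diffs by (auto simp: p p' split: if_splits)
  ultimately show ?thesis
    by (simp add: p p')
qed

lemma solid_partition_finite: "solid_partition \<pi> \<Longrightarrow> finite \<pi>"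
  by (simp add: solid_partition_def)

lemma solid_partition_coord_pos:
  "solid_partition \<pi> \<Longrightarrow> p \<in> \<pi> \<Longrightarrow> b \<in> {1..4} \<Longrightarrow> 1 \<le> coord b p"
  unfolding solid_partition_def by blast

lemma solid_partition_down_closed:
  "solid_partition \<pi> \<Longrightarrow> p \<in> \<pi> \<Longrightarrow> \<forall>b\<in>{1..4}. 1 \<le> coord b p' \<and> coord b p' \<le> coord b p \<Longrightarrow> p' \<in> \<pi>"
  unfolding solid_partition_def by blast

lemma card_lowered_boxes:
  assumes sp: "solid_partition \<pi>" and slice: "\<forall>p\<in>\<pi>. coord a p = 1" and a: "a \<in> {1..4}"
    and p: "p \<in> \<pi>" and T: "T \<subseteq> {1..4}" "a \<notin> T"
  shows "card {p' \<in> \<pi>. box_mon p' + (\<Sum>t\<in>T. qv t) = box_mon p} = of_bool (\<forall>t\<in>T. 2 \<le> coord t p)"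
proof -
  note pos = solid_partition_coord_pos[OF sp] and down = solid_partition_down_closed[OF sp]
  have lower_p: "box_mon (lower T p) + (\<Sum>t\<in>T. qv t) = box_mon p"
    using T pos[OF p] by (intro box_mon_lower) auto
  have "{p' \<in> \<pi>. box_mon p' + (\<Sum>t\<in>T. qv t) = box_mon p} = {lower T p} \<inter> \<pi>"
  proof (intro equalityI subsetI)
    fix p' assume "p' \<in> {p' \<in> \<pi>. box_mon p' + (\<Sum>t\<in>T. qv t) = box_mon p}"
    then have p': "p' \<in> \<pi>" "box_mon p' + (\<Sum>t\<in>T. qv t) = box_mon (lower T p) + (\<Sum>t\<in>T. qv t)"
      using lower_p by auto
    have "p' = lower T p"
    proof (rule box_mon_inj)
      show "coord a p' = coord a (lower T p)"
        using slice p p'(1) a T(2) by (simp add: coord_lower)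
      show "box_mon p' = box_mon (lower T p)"
        using p'(2) by simp
    qed
    then show "p' \<in> {lower T p} \<inter> \<pi>"
      using p'(1) by simp
  qed (use lower_p in auto)
  moreover have "lower T p \<in> \<pi> \<longleftrightarrow> (\<forall>t\<in>T. 2 \<le> coord t p)"
  proof
    assume "lower T p \<in> \<pi>"
    then show "\<forall>t\<in>T. 2 \<le> coord t p"
      using pos[of "lower T p"] T(1) by (force simp: coord_lower)
  next
    assume "\<forall>t\<in>T. 2 \<le> coord t p"
    then show "lower T p \<in> \<pi>"
      using pos[OF p] by (intro down[OF p]) (auto simp: coord_lower)
  qed
  ultimately show ?thesis by auto
qed

lemma lookup_double_difference_zero:
  "Poly_Mapping.lookup ((1 - mono (- B)) * (1 - mono (- C)) * mono A) 0 =
    of_bool (A = 0) - of_bool (A = B) - of_bool (A = C) + of_bool (A = B + C)"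
proof -
  have "(1 - mono (- B)) * (1 - mono (- C)) * mono A =
      mono A - mono (A - B) - mono (A - C) + mono (A - (B + C))"
    by (simp add: algebra_simps mono_mult)
  then show ?thesis
    by (simp add: lookup_add lookup_minus lookup_mono)
qed

lemma diagonal_box_iff:
  assumes "{1, 2, 3} = {a, b, c}" "coord a p = 1"
  shows "(\<exists>i j. p = (i, i, i, j) \<and> i < j) \<longleftrightarrow> coord b p = 1 \<and> coord c p = 1 \<and> 2 \<le> coord 4 p"
proof -
  have "a \<in> {1, 2, 3}"
    using assms(1) by blast
  then have "(\<exists>i j. p = (i, i, i, j) \<and> i < j) \<longleftrightarrow> (\<forall>t\<in>{1, 2, 3}. coord t p = 1) \<and> 2 \<le> coord 4 p"
    using assms(2) by (cases p) auto
  also have "(\<forall>t\<in>{1, 2, 3}. coord t p = 1) \<longleftrightarrow> coord b p = 1 \<and> coord c p = 1"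
    unfolding assms(1) using assms(2) by simp
  finally show ?thesis by simp
qed

lemma lookup_Ychar_zero:
  assumes sp: "solid_partition \<pi>" and slice: "\<forall>p\<in>\<pi>. coord a p = 1" and a: "a \<in> {1, 2, 3}"
  shows "Poly_Mapping.lookup (Ychar a \<pi>) 0 = int (sigma4 \<pi>)"
proof -
  obtain b c where abc: "{1, 2, 3} = {a, b, c}" "distinct [a, b, c, 4]"
    and qv_sum: "qv a + qv b + qv c = - qv 4"
    using other_two_coords[OF a] .
  have other: "{1, 2, 3} - {a} = {b, c}" "b \<noteq> c"
    using abc by auto
  have fin: "finite \<pi>"
    using sp by (rule solid_partition_finite)
  define N where "N T p = int (card {p' \<in> \<pi>. box_mon p' + (\<Sum>t\<in>T. qv t) = box_mon p})" for T p
  have count: "(\<Sum>p'\<in>\<pi>. of_bool (box_mon p' - box_mon p - qv a = s)) = N T p"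
    if "(\<Sum>t\<in>T. qv t) = - (qv a + s)" for T s p
  proof -
    have "box_mon p' - box_mon p - qv a = s \<longleftrightarrow> box_mon p' + (\<Sum>t\<in>T. qv t) = box_mon p" for p'
      unfolding that by (auto simp: algebra_simps)
    then show ?thesis
      using fin by (simp add: N_def Int_def)
  qed
  have sums: "(\<Sum>t\<in>{b, c, 4}. qv t) = - (qv a + 0)" "(\<Sum>t\<in>{c, 4}. qv t) = - (qv a + qv b)"
    "(\<Sum>t\<in>{b, 4}. qv t) = - (qv a + qv c)" "(\<Sum>t\<in>{4}. qv t) = - (qv a + (qv b + qv c))"
    using abc(2) qv_sum by (simp_all add: algebra_simps eq_neg_iff_add_eq_0)
  have "Poly_Mapping.lookup (Ychar a \<pi>) 0 = (\<Sum>p\<in>\<pi>. \<Sum>p'\<in>\<pi>.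
      of_bool (box_mon p' - box_mon p - qv a = 0) - of_bool (box_mon p' - box_mon p - qv a = qv b)
      - of_bool (box_mon p' - box_mon p - qv a = qv c) + of_bool (box_mon p' - box_mon p - qv a = qv b + qv c))"
    by (simp add: Ychar_eq_sum[OF fin other] lookup_sum lookup_double_difference_zero)
  also have "\<dots> = (\<Sum>p\<in>\<pi>. N {b, c, 4} p - N {c, 4} p - N {b, 4} p + N {4} p)"
    by (intro sum.cong refl)
      (simp only: sum.distrib sum_subtractf count[OF sums(1)] count[OF sums(2)]
        count[OF sums(3)] count[OF sums(4)])
  also have "\<dots> = (\<Sum>p\<in>\<pi>. of_bool (\<exists>i j. p = (i, i, i, j) \<and> i < j))"
  proof (rule sum.cong[OF refl])
    fix p assume p: "p \<in> \<pi>"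
    have "{a, b, c} \<subseteq> {1, 2, 3}"
      unfolding abc(1) ..
    then have "b \<in> {1, 2, 3}" "c \<in> {1, 2, 3}"
      by auto
    then have range: "{b, c, 4} \<subseteq> {1..4}" "a \<in> {1..4}" "a \<notin> {b, c, 4}"
      using a abc(2) by auto
    have pos: "1 \<le> coord b p" "1 \<le> coord c p"
      using solid_partition_coord_pos[OF sp p] range(1) by auto
    have "N T p = of_bool (\<forall>t\<in>T. 2 \<le> coord t p)" if "T \<subseteq> {b, c, 4}" for T
      unfolding N_def using that range by (subst card_lowered_boxes[OF sp slice _ p]) auto
    then show "N {b, c, 4} p - N {c, 4} p - N {b, 4} p + N {4} p = of_bool (\<exists>i j. p = (i, i, i, j) \<and> i < j)"
      using diagonal_box_iff[OF abc(1)] slice p pos by auto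
  qed
  also have "\<dots> = int (sigma4 \<pi>)"
    using fin by (simp add: sigma4_def Int_def)
  finally show ?thesis .
qed

lemma sigma4_eq_0:
  assumes "solid_partition \<pi>" "\<forall>p\<in>\<pi>. coord 4 p = 1"
  shows "sigma4 \<pi> = 0"
proof -
  have "{p \<in> \<pi>. \<exists>i j. p = (i, i, i, j) \<and> i < j} = {}"
  proof (intro equals0I)
    fix p assume "p \<in> {p \<in> \<pi>. \<exists>i j. p = (i, i, i, j) \<and> i < j}"
    then obtain i j where ij: "(i, i, i, j) \<in> \<pi>" "i < j"
      by blast
    then have "j = 1" "1 \<le> i"
      using assms(2) solid_partition_coord_pos[OF assms(1) ij(1), of 1] by auto
    with ij(2) show False
      by simp
  qed
  then show ?thesis
    unfolding sigma4_def by (simp only: card.empty)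
qed


lemma index_at_specialized_D8char:
  fixes q1 q2 q3 x :: "'f::field"
  defines "w \<equiv> (q1, q2, q3, x, 1)"
  assumes "q1 \<noteq> 0" "q2 \<noteq> 0" "q3 \<noteq> 0" "x \<noteq> 0" "a \<in> {1, 2, 3}"
    and sp: "solid_partition \<pi>" and slice: "\<forall>p\<in>\<pi>. coord a p = 1"
    and avoid8: "\<forall>m \<in> Poly_Mapping.keys (pushforward (specialize_K a) (D8char \<pi>)). evm w m \<noteq> 1"
    and avoid6: "\<forall>m \<in> Poly_Mapping.keys (D6char a \<pi>). evm w m \<noteq> 1"
  shows "index_at w (pushforward (specialize_K a) (D8char \<pi>)) = (-1) ^ sigma4 \<pi> * index_at w (D6char a \<pi>)"
proof -
  have E_mult: "\<And>m n. evm w (m + n) = evm w m * evm w n" and E_nonzero: "\<And>m. evm w m \<noteq> 0"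
    using assms(2-5) by (simp_all add: w_def evm_add evm_nonzero)
  define Y where "Y = Ychar a \<pi>"
  have D8_eq: "pushforward (specialize_K a) (D8char \<pi>) = D6char a \<pi> + (dual Y - Y)"
    unfolding Y_def using assms(6) sp by (simp add: pushforward_specialize_K_D8char_eq_D6char solid_partition_finite)
  then have "Poly_Mapping.keys (dual Y - Y) \<subseteq>
      Poly_Mapping.keys (pushforward (specialize_K a) (D8char \<pi>)) \<union> Poly_Mapping.keys (D6char a \<pi>)"
    using keys_diff[of "pushforward (specialize_K a) (D8char \<pi>)" "D6char a \<pi>"] by simp
  then have avoid: "\<forall>m \<in> Poly_Mapping.keys (dual Y - Y). evm w m \<noteq> 1"
    using avoid8 avoid6 by blast
  have "index_at w (pushforward (specialize_K a) (D8char \<pi>)) = index_at w (D6char a \<pi>) * index_at w (dual Y - Y)"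
    unfolding D8_eq index_at_eq_char_prod using avoid6 avoid
    by (intro char_prod_add) auto
  also have "index_at w (dual Y - Y) = (-1) powi Poly_Mapping.lookup Y 0"
    unfolding index_at_eq_char_prod Y_def
    by (rule char_prod_antisymmetric[OF E_mult E_nonzero avoid[unfolded Y_def]
          char_prod_Ychar[OF E_mult E_nonzero solid_partition_finite[OF sp] assms(6)]])
  also have "Poly_Mapping.lookup Y 0 = int (sigma4 \<pi>)"
    unfolding Y_def by (rule lookup_Ychar_zero[OF sp slice assms(6)])
  finally show ?thesis
    by simp
qed

theorem lemma6p14:
  fixes q1 q2 q3 x :: complex and a :: nat and \<pi> :: "point4 set"
  assumes "q1 \<noteq> 0" and "q2 \<noteq> 0" and "q3 \<noteq> 0" and "x \<noteq> 0"
    and "a \<in> {1..4}"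
    and "solid_partition \<pi>"
    and "\<forall>p\<in>\<pi>. coord a p = 1"
    and "\<forall>m\<in>Poly_Mapping.keys (D8char \<pi>).
           evm (q1, q2, q3, x, evm (q1, q2, q3, x, 1) (qv a)) m \<noteq> 1"
    and "\<forall>m\<in>Poly_Mapping.keys (D6char a \<pi>). evm (q1, q2, q3, x, 1) m \<noteq> 1"
  shows "(-1) ^ sigma4 \<pi> * index_at (q1, q2, q3, x, evm (q1, q2, q3, x, 1) (qv a)) (D8char \<pi>)
         = index_at (q1, q2, q3, x, 1) (D6char a \<pi>)"
proof -
  let ?w = "(q1, q2, q3, x, 1::complex)"
  define \<chi> where "\<chi> = pushforward (specialize_K a) (D8char \<pi>)"
  have specialize: "index_at (q1, q2, q3, x, evm ?w (qv a)) (D8char \<pi>) = index_at ?w \<chi>"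
    unfolding \<chi>_def using assms(1-4,8) by (rule index_at_specialize_K)
  have \<chi>_avoid: "\<forall>m \<in> Poly_Mapping.keys \<chi>. evm ?w m \<noteq> 1"
    using keys_pushforward[of "specialize_K a" "D8char \<pi>"] assms(8)
    by (auto simp: \<chi>_def evm_specialize_K[OF assms(1-4)])
  from assms(5) consider "a = 4" | "a \<in> {1, 2, 3}"
    by fastforce
  then show ?thesis
  proof cases
    case 1
    then show ?thesis
      using specialize sigma4_eq_0[OF assms(6)] assms(7)
        pushforward_specialize_K_D8char_4[OF solid_partition_finite[OF assms(6)]]
      by (simp add: \<chi>_def)
  next
    case 2
    then have "index_at ?w \<chi> = (-1) ^ sigma4 \<pi> * index_at ?w (D6char a \<pi>)"
      unfolding \<chi>_def using assms(1-4,6,7,9) \<chi>_avoid[unfolded \<chi>_def]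
      by (intro index_at_specialized_D8char) auto
    then show ?thesis
      using specialize by (simp flip: power_mult_distrib)
  qed
qed

end
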